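(* Let $k_{cl}(n)$ be the largest $k$ such that Maker has a winning strategy in the $k$-clique game on $K_n$. Let $TT_k$ be the transitive tournament on $\{u_1,\dots,u_k\}$, with $u_i\to u_j$ for all $i<j$. Then Maker has a winning strategy in the $k$-tournament game $\mathcal{T}(k,n)$ in which the fixed tournament is $TT_k$, for $k=k_{cl}(n)$.
   Context: In the $k$-clique game on $K_n$, Maker (moving first) and Breaker alternately claim one unclaimed edge of $K_n$; Maker wins if her graph contains a clique on $k$ vertices. In the $k$-tournament game, each player additionally chooses an orientation for each claimed edge, and Maker wins if her digraph contains a copy of the fixed tournament. *)

theory Defs
  imports Main
begin

text \<open>A general Maker-Breaker game in which each move is an element of the set Mv of
  possible moves; und maps a move to the board element (here: an edge of K_n) it claims.
  W is Maker's winning condition on the set of her moves.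
  maker_wins Mv und W M B: from the position where Maker has made the moves M,
  Breaker the moves B, and Maker is to move, Maker has a winning strategy.
  If the board is exhausted without W holding, Breaker wins.\<close>

definition avail :: "'m set \<Rightarrow> ('m \<Rightarrow> 'e) \<Rightarrow> 'm set \<Rightarrow> 'm set \<Rightarrow> 'm set" where
  "avail Mv und M B = {a \<in> Mv. und a \<notin> und ` (M \<union> B)}"

inductive maker_wins :: "'m set \<Rightarrow> ('m \<Rightarrow> 'e) \<Rightarrow> ('m set \<Rightarrow> bool) \<Rightarrow> 'm set \<Rightarrow> 'm set \<Rightarrow> bool"
  for Mv und W where
  base: "W M \<Longrightarrow> maker_wins Mv und W M B"
| step: "a \<in> avail Mv und M B \<Longrightarrow>
     W (insert a M) \<or>
       (avail Mv und (insert a M) B \<noteq> {} \<and>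
        (\<forall>b \<in> avail Mv und (insert a M) B. maker_wins Mv und W (insert a M) (insert b B)))
     \<Longrightarrow> maker_wins Mv und W M B"

definition Kn_edges :: "nat \<Rightarrow> nat set set" where
  "Kn_edges n = {e. \<exists>u v. u < n \<and> v < n \<and> u \<noteq> v \<and> e = {u, v}}"

definition Kn_arcs :: "nat \<Rightarrow> (nat \<times> nat) set" where
  "Kn_arcs n = {(u, v). u < n \<and> v < n \<and> u \<noteq> v}"

definition has_clique :: "nat \<Rightarrow> nat \<Rightarrow> nat set set \<Rightarrow> bool" where
  "has_clique n k G \<longleftrightarrow> (\<exists>S \<subseteq> {..<n}. card S = k \<and>
      (\<forall>u \<in> S. \<forall>v \<in> S. u \<noteq> v \<longrightarrow> {u, v} \<in> G))"

definition maker_wins_clique :: "nat \<Rightarrow> nat \<Rightarrow> bool" where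
  "maker_wins_clique n k = maker_wins (Kn_edges n) id (has_clique n k) {} {}"

definition k_cl :: "nat \<Rightarrow> nat" where
  "k_cl n = (GREATEST k. maker_wins_clique n k)"

definition has_TT :: "nat \<Rightarrow> nat \<Rightarrow> (nat \<times> nat) set \<Rightarrow> bool" where
  "has_TT n k D \<longleftrightarrow> (\<exists>f. inj_on f {..<k} \<and> f ` {..<k} \<subseteq> {..<n} \<and>
      (\<forall>i j. i < j \<and> j < k \<longrightarrow> (f i, f j) \<in> D))"

text \<open>The k-tournament game on K_n with target TT_k: each move claims an unclaimed edge
  together with an orientation, i.e. an arc whose underlying edge is unclaimed.\<close>
definition maker_wins_TT :: "nat \<Rightarrow> nat \<Rightarrow> bool" where
  "maker_wins_TT n k = maker_wins (Kn_arcs n) (\<lambda>(u, v). {u, v}) (has_TT n k) {} {}"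

end

theory Submission
  imports Defs
begin

text \<open>Maker plays her winning strategy for the clique game and orients each of her
  edges from the smaller to the larger endpoint, while reading every arc of Breaker as
  its underlying edge. Breaker's orientations are irrelevant, so the tournament game is
  at least as good for Maker as the clique game; and a clique all of whose arcs point
  upwards is, listed in increasing order, a copy of the transitive tournament.\<close>

lemma maker_wins_imp_ex_win: "maker_wins Mv und W M B \<Longrightarrow> \<exists>M'. W M'"
  by (induction rule: maker_wins.induct) auto

lemma avail_project:
  assumes "h ` Mv' \<subseteq> Mv" and "\<And>a. und' a = und (h a)"
  shows "avail Mv' und' M' B' = {a \<in> Mv'. h a \<in> avail Mv und (h ` M') (h ` B')}"
  using assms unfolding avail_def by (auto simp: image_image image_Un)

text \<open>The primed game simulates the unprimed one through the projection h: Breaker's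
  moves are read through h, and Maker answers each move of her strategy by a lift of it
  satisfying P.\<close>

lemma maker_wins_simulation:
  assumes moves: "h ` Mv' \<subseteq> Mv" and und': "\<And>a. und' a = und (h a)"
    and lift: "\<And>a. a \<in> Mv \<Longrightarrow> \<exists>a'\<in>Mv'. P a' \<and> h a' = a"
    and win: "\<And>M'. Ball M' P \<Longrightarrow> W (h ` M') \<Longrightarrow> W' M'"
    and "maker_wins Mv und W M B"
  shows "h ` M' = M \<Longrightarrow> h ` B' = B \<Longrightarrow> Ball M' P \<Longrightarrow> maker_wins Mv' und' W' M' B'"
  using \<open>maker_wins Mv und W M B\<close>
proof (induction arbitrary: M' B' rule: maker_wins.induct)
  case (base M B)
  then show ?case by (auto intro: maker_wins.base win)
next
  case (step a M B)
  note avail' = avail_project[of h Mv' Mv und' und, OF moves und']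
  have "a \<in> Mv" using step.hyps(1) by (simp add: avail_def)
  then obtain a' where a': "a' \<in> Mv'" "P a'" "h a' = a" using lift by blast
  have proj: "h ` insert a' M' = insert a M" "Ball (insert a' M') P"
    using a' step.prems by auto
  have "a' \<in> avail Mv' und' M' B'"
    using a' step.hyps(1) step.prems by (simp add: avail')
  then show ?case
  proof (rule maker_wins.step)
    show "W' (insert a' M') \<or>
        (avail Mv' und' (insert a' M') B' \<noteq> {} \<and>
         (\<forall>b'\<in>avail Mv' und' (insert a' M') B'.
            maker_wins Mv' und' W' (insert a' M') (insert b' B')))"
    proof (cases "W (insert a M)")
      case True
      then show ?thesis using win proj by metis
    next
      case False
      then have IH: "avail Mv und (insert a M) B \<noteq> {}"
        "\<And>b'. h b' \<in> avail Mv und (insert a M) B \<Longrightarrow>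
           maker_wins Mv' und' W' (insert a' M') (insert b' B')"
        using step.IH proj step.prems by auto
      then obtain e where e: "e \<in> avail Mv und (insert a M) B" by blast
      then obtain e' where "e' \<in> Mv'" "h e' = e" using lift by (auto simp: avail_def)
      then have "e' \<in> avail Mv' und' (insert a' M') B'"
        using e proj step.prems by (simp add: avail')
      moreover have "maker_wins Mv' und' W' (insert a' M') (insert b' B')"
        if "b' \<in> avail Mv' und' (insert a' M') B'" for b'
        using that IH(2) proj step.prems by (simp add: avail')
      ultimately show ?thesis by blast
    qed
  qed
qed

lemma has_clique_imp_le: "has_clique n k G \<Longrightarrow> k \<le> n"
  unfolding has_clique_def by (metis card_lessThan card_mono finite_lessThan)

lemma maker_wins_clique_k_cl: "maker_wins_clique n (k_cl n)"
proof -
  have "maker_wins_clique n 0"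
    unfolding maker_wins_clique_def
    by (rule maker_wins.base) (auto simp: has_clique_def intro!: exI[of _ "{}"])
  moreover have "k \<le> n" if "maker_wins_clique n k" for k
    using that maker_wins_imp_ex_win has_clique_imp_le
    unfolding maker_wins_clique_def by blast
  ultimately show ?thesis
    unfolding k_cl_def by (rule GreatestI_nat)
qed

lemma has_TT_if_has_clique_upward:
  assumes "has_clique n k ((\<lambda>(u, v). {u, v}) ` D)" and "\<forall>(u, v)\<in>D. u < v"
  shows "has_TT n k D"
proof -
  obtain S where S: "S \<subseteq> {..<n}" "card S = k"
    and clique: "\<And>u v. u \<in> S \<Longrightarrow> v \<in> S \<Longrightarrow> u \<noteq> v \<Longrightarrow> {u, v} \<in> (\<lambda>(u, v). {u, v}) ` D"
    using assms(1) unfolding has_clique_def by blast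
  have "finite S" using S(1) finite_subset by blast
  define xs where "xs = sorted_list_of_set S"
  have xs: "length xs = k" "set xs = S" "distinct xs" "sorted_wrt (<) xs"
    using S \<open>finite S\<close> by (simp_all add: xs_def)
  show ?thesis unfolding has_TT_def
  proof (intro exI[of _ "(!) xs"] conjI allI impI)
    show "inj_on ((!) xs) {..<k}"
      using xs by (simp add: inj_on_def nth_eq_iff_index_eq)
    show "(!) xs ` {..<k} \<subseteq> {..<n}"
      using xs S(1) by auto
    fix i j assume ij: "i < j \<and> j < k"
    then have lt: "xs ! i < xs ! j"
      using xs by (simp add: sorted_wrt_iff_nth_less)
    moreover have "xs ! i \<in> S" "xs ! j \<in> S"
      using ij xs by auto
    ultimately obtain u v where "(u, v) \<in> D" "{u, v} = {xs ! i, xs ! j}"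
      using clique by fastforce
    moreover from this have "u < v" using assms(2) by auto
    ultimately show "(xs ! i, xs ! j) \<in> D"
      using lt by (auto simp: doubleton_eq_iff)
  qed
qed

lemma Kn_edge_upward_arc:
  "e \<in> Kn_edges n \<Longrightarrow> \<exists>a\<in>Kn_arcs n. (\<lambda>(u, v). u < v) a \<and> (\<lambda>(u, v). {u, v}) a = e"
  unfolding Kn_edges_def Kn_arcs_def
  by (auto simp: doubleton_eq_iff) (metis linorder_neqE_nat)

theorem mainTheorem9:
  fixes n :: nat
  shows "maker_wins_TT n (k_cl n)"
  unfolding maker_wins_TT_def
proof (rule maker_wins_simulation)
  show "maker_wins (Kn_edges n) id (has_clique n (k_cl n)) {} {}"
    using maker_wins_clique_k_cl unfolding maker_wins_clique_def .
  show "(\<lambda>(u, v). {u, v}) ` Kn_arcs n \<subseteq> Kn_edges n"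
    unfolding Kn_arcs_def Kn_edges_def by auto
  show "\<And>M'. Ball M' (\<lambda>(u, v). u < v) \<Longrightarrow> has_clique n (k_cl n) ((\<lambda>(u, v). {u, v}) ` M') \<Longrightarrow>
      has_TT n (k_cl n) M'"
    by (rule has_TT_if_has_clique_upward) auto
qed (auto simp: Kn_edge_upward_arc)

end
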